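(* Let $f:(0,\infty)\to\mathbb{R}$ be convex, strictly convex and thrice differentiable at $1$, with $f(1)=0$ and $f''(1)>0$, such that for every $t\in(0,\infty)$, $$\bigl(f(t)-f'(1)(t-1)\bigr)\left(1-\frac{f'''(1)}{3f''(1)}(t-1)\right)\ge \frac{f''(1)}{2}(t-1)^2 .$$ Let $\mathcal{X}$ be a finite set, $P_X$ a pmf on $\mathcal{X}$ with $P_X(x)>0$ for all $x$, and $R_X\neq P_X$ a pmf on $\mathcal{X}$. Write $J_X=R_X-P_X$ and $K_X(x)=J_X(x)/\sqrt{P_X(x)}$. Then $$D_f(R_X\|P_X)\ge \frac{f''(1)}{2}\,\frac{\|K_X\|_2^2\,\|J_X\|_1}{\max_{x\in\mathcal{X}}\left|\frac{J_X(x)}{P_X(x)}\right|}.$$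
   Context: Strict convexity at $1$ means $\lambda f(x)+(1-\lambda)f(y)>f(1)$ whenever $\lambda\in(0,1)$, $x,y>0$, $\lambda x+(1-\lambda)y=1$. The $f$-divergence is $D_f(R_X\|P_X)=\sum_x P_X(x)f(R_X(x)/P_X(x))$, with the convention $f(0)=\lim_{t\to0^+}f(t)$. $\|\cdot\|_p$ denotes the $\ell^p$-norm. *)

theory Defs
  imports "HOL-Analysis.Analysis" "HOL-Library.Extended_Real"
begin

definition strictly_convex_at_one :: "(real \<Rightarrow> real) \<Rightarrow> bool" where
  "strictly_convex_at_one f \<longleftrightarrow>
     (\<forall>l x y. 0 < l \<and> l < 1 \<and> 0 < x \<and> 0 < y \<and> x \<noteq> y \<and> l * x + (1 - l) * y = 1
        \<longrightarrow> l * f x + (1 - l) * f y > f 1)"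

text \<open>The convention f(0) = lim_{t -> 0+} f(t), taken in the extended reals
  (for convex f the limit exists in (-inf, +inf], and then equals the liminf).\<close>
definition f_at_zero :: "(real \<Rightarrow> real) \<Rightarrow> ereal" where
  "f_at_zero f = Liminf (at_right 0) (\<lambda>t. ereal (f t))"

definition f_div :: "(real \<Rightarrow> real) \<Rightarrow> ('a::finite \<Rightarrow> real) \<Rightarrow> ('a \<Rightarrow> real) \<Rightarrow> ereal" where
  "f_div f R P = (\<Sum>x\<in>UNIV. if R x = 0 then ereal (P x) * f_at_zero f
                              else ereal (P x * f (R x / P x)))"

end

theory Submission
  imports Defs "HOL-Real_Asymp.Real_Asymp"
begin

text \<open>
  Write \<open>a = f''(1)/2\<close> and \<open>c = f'''(1)/(3f''(1))\<close>.  Convexity puts \<open>f\<close> above its tangent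
  at 1, so in the hypothesis the first factor is nonnegative and the second, \<open>1 - c(t - 1)\<close>,
  must be positive for \<open>t \<noteq> 1\<close>.  Dividing by it, \<open>f\<close> dominates the rational function
  \<open>f'(1)(t - 1) + a(t - 1)\<^sup>2 / (1 - c(t - 1))\<close>, also at \<open>t = 0\<close> in the limit, where the bound
  is \<open>\<infinity>\<close> if \<open>1 + c = 0\<close>.  Averaging at \<open>t = R/P\<close> under \<open>P\<close> kills the linear term; with
  \<open>u = J/P\<close> and \<open>d = 1 - c u\<close>, so that \<open>\<Sum> P d = 1\<close>, Cauchy-Schwarz and \<open>|u| \<le> max |u|\<close> give
  \<open>D\<^sub>f \<ge> a \<Sum> P u\<^sup>2/d \<ge> a (\<Sum> P |u|)\<^sup>2 \<ge> a (\<Sum> P u\<^sup>2)(\<Sum> P |u|) / max |u|\<close>.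
\<close>

lemma sum_weighted_abs_sq_le:
  fixes p d u :: "'a \<Rightarrow> real"
  assumes "\<And>x. x \<in> A \<Longrightarrow> 0 \<le> p x" and "\<And>x. x \<in> A \<Longrightarrow> 0 < d x"
  shows "(\<Sum>x\<in>A. p x * \<bar>u x\<bar>)\<^sup>2 \<le> (\<Sum>x\<in>A. p x * (u x)\<^sup>2 / d x) * (\<Sum>x\<in>A. p x * d x)"
proof -
  have "(\<Sum>x\<in>A. p x * \<bar>u x\<bar>) = (\<Sum>x\<in>A. (sqrt (p x) * \<bar>u x\<bar> / sqrt (d x)) * sqrt (p x * d x))"
  proof (rule sum.cong)
    fix x assume "x \<in> A"
    with assms have "0 < d x" "0 \<le> p x" by auto
    then show "p x * \<bar>u x\<bar> = sqrt (p x) * \<bar>u x\<bar> / sqrt (d x) * sqrt (p x * d x)"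
      by (simp add: real_sqrt_mult)
  qed simp
  also have "\<dots>\<^sup>2 \<le> (\<Sum>x\<in>A. (sqrt (p x) * \<bar>u x\<bar> / sqrt (d x))\<^sup>2) * (\<Sum>x\<in>A. (sqrt (p x * d x))\<^sup>2)"
    by (rule Cauchy_Schwarz_ineq_sum)
  also have "\<dots> = (\<Sum>x\<in>A. p x * (u x)\<^sup>2 / d x) * (\<Sum>x\<in>A. p x * d x)"
    using assms
    by (intro arg_cong2[where f = "(*)"] sum.cong)
       (auto simp: power_divide power_mult_distrib less_imp_le)
  finally show ?thesis .
qed

lemma sum_sq_mult_sum_abs_div_max_le:
  fixes p d u :: "'a \<Rightarrow> real"
  assumes p_nonneg: "\<And>x. x \<in> A \<Longrightarrow> 0 \<le> p x" and d_pos: "\<And>x. x \<in> A \<Longrightarrow> 0 < d x"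
    and d_mean: "(\<Sum>x\<in>A. p x * d x) = 1"
    and u_le: "\<And>x. x \<in> A \<Longrightarrow> \<bar>u x\<bar> \<le> M" and M_pos: "0 < M"
  shows "(\<Sum>x\<in>A. p x * (u x)\<^sup>2) * (\<Sum>x\<in>A. p x * \<bar>u x\<bar>) / M \<le> (\<Sum>x\<in>A. p x * (u x)\<^sup>2 / d x)"
proof -
  define W where "W = (\<Sum>x\<in>A. p x * (u x)\<^sup>2)"
  define L where "L = (\<Sum>x\<in>A. p x * \<bar>u x\<bar>)"
  have L_nonneg: "0 \<le> L"
    unfolding L_def using p_nonneg by (intro sum_nonneg) auto
  have "W \<le> (\<Sum>x\<in>A. M * (p x * \<bar>u x\<bar>))"
    unfolding W_def
  proof (rule sum_mono)
    fix x assume x: "x \<in> A"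
    have "p x * (u x)\<^sup>2 = (p x * \<bar>u x\<bar>) * \<bar>u x\<bar>"
      by (simp add: power2_eq_square abs_mult_self_eq)
    also have "\<dots> \<le> (p x * \<bar>u x\<bar>) * M"
      using x p_nonneg u_le by (intro mult_left_mono) auto
    finally show "p x * (u x)\<^sup>2 \<le> M * (p x * \<bar>u x\<bar>)" by (simp add: mult.commute)
  qed
  then have "W \<le> M * L"
    by (simp add: sum_distrib_left L_def)
  then have "W * L \<le> L\<^sup>2 * M"
    using mult_right_mono[OF _ L_nonneg] by (fastforce simp: power2_eq_square mult_ac)
  then have "W * L / M \<le> L\<^sup>2"
    using M_pos by (simp add: pos_divide_le_eq)
  also have "\<dots> \<le> (\<Sum>x\<in>A. p x * (u x)\<^sup>2 / d x)"
    using sum_weighted_abs_sq_le[of A p d u] p_nonneg d_pos d_mean by (simp add: L_def)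
  finally show ?thesis by (simp add: W_def L_def)
qed

lemma sum_mult_relative_diff_eq_zero:
  fixes P R :: "'a \<Rightarrow> real"
  assumes "\<And>x. x \<in> A \<Longrightarrow> P x \<noteq> 0" and "sum P A = sum R A"
  shows "(\<Sum>x\<in>A. P x * ((R x - P x) / P x)) = 0"
  using assms by (simp add: sum_subtractf)

locale rational_minorant =
  fixes f :: "real \<Rightarrow> real" and k a c :: real
  assumes a_pos: "0 < a"
    and tangent: "\<And>t. 0 < t \<Longrightarrow> k * (t - 1) \<le> f t"
    and excess: "\<And>t. 0 < t \<Longrightarrow> a * (t - 1)\<^sup>2 \<le> (f t - k * (t - 1)) * (1 - c * (t - 1))"
begin

definition minorant :: "real \<Rightarrow> real" where
  "minorant t = k * (t - 1) + a * (t - 1)\<^sup>2 / (1 - c * (t - 1))"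

lemma denominator_pos:
  assumes "0 < t" "t \<noteq> 1"
  shows "0 < 1 - c * (t - 1)"
proof -
  have "0 < (f t - k * (t - 1)) * (1 - c * (t - 1))"
    using excess[of t] a_pos assms by (smt (verit) mult_pos_pos zero_less_power2)
  moreover have "0 \<le> f t - k * (t - 1)"
    using tangent[OF \<open>0 < t\<close>] by simp
  ultimately show ?thesis
    by (metis mult_nonneg_nonpos not_less)
qed

lemma minorant_le:
  assumes "0 < t"
  shows "minorant t \<le> f t"
proof (cases "t = 1")
  case True
  then show ?thesis using tangent[OF assms] by (simp add: minorant_def)
next
  case False
  have "a * (t - 1)\<^sup>2 / (1 - c * (t - 1)) \<le> f t - k * (t - 1)"
    using excess[OF assms] denominator_pos[OF assms False] by (simp add: pos_divide_le_eq)
  then show ?thesis by (simp add: minorant_def)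
qed

lemma one_plus_c_nonneg: "0 \<le> 1 + c"
proof (rule ccontr)
  assume "\<not> 0 \<le> 1 + c"
  then have c: "c < -1" by simp
  define t where "t = (1 + c) / (2 * c)"
  have "0 < t" "t < 1"
    unfolding t_def using c by (simp_all add: divide_neg_neg divide_less_eq)
  moreover have "1 - c * (t - 1) = (1 + c) / 2"
    unfolding t_def using c by (simp add: field_simps)
  ultimately show False
    using denominator_pos[of t] c by simp
qed

lemma f_at_zero_ge_minorant:
  assumes "0 < 1 + c"
  shows "ereal (minorant 0) \<le> f_at_zero f"
proof -
  have "((\<lambda>t. ereal (minorant t)) \<longlongrightarrow> ereal (minorant 0)) (at_right 0)"
    unfolding minorant_def using assms by (intro tendsto_intros) auto
  then have "ereal (minorant 0) = Liminf (at_right 0) (\<lambda>t. ereal (minorant t))"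
    by (rule lim_imp_Liminf[OF trivial_limit_at_right_real, symmetric])
  also have "\<dots> \<le> Liminf (at_right 0) (\<lambda>t. ereal (f t))"
    by (intro Liminf_mono eventually_at_right_less[THEN eventually_mono]) (simp add: minorant_le)
  finally show ?thesis unfolding f_at_zero_def .
qed

lemma f_at_zero_infinite:
  assumes "1 + c = 0"
  shows "f_at_zero f = \<infinity>"
proof -
  have "c = -1" using assms by simp
  then have "minorant = (\<lambda>t. k * (t - 1) + a * (t - 1)\<^sup>2 / t)"
    unfolding minorant_def fun_eq_iff by simp
  then have "((\<lambda>t. ereal (minorant t)) \<longlongrightarrow> \<infinity>) (at_right 0)"
    unfolding tendsto_PInfty_eq_at_top using a_pos by simp real_asymp
  then have "\<infinity> = Liminf (at_right 0) (\<lambda>t. ereal (minorant t))"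
    by (simp add: lim_imp_Liminf[OF trivial_limit_at_right_real])
  also have "\<dots> \<le> Liminf (at_right 0) (\<lambda>t. ereal (f t))"
    by (intro Liminf_mono eventually_at_right_less[THEN eventually_mono]) (simp add: minorant_le)
  finally show ?thesis unfolding f_at_zero_def by (simp add: top_unique)
qed

lemma sum_minorant_eq:
  fixes P R :: "'b \<Rightarrow> real"
  assumes "\<And>x. x \<in> A \<Longrightarrow> P x \<noteq> 0" and "sum P A = sum R A"
  shows "(\<Sum>x\<in>A. P x * minorant (R x / P x))
       = a * (\<Sum>x\<in>A. P x * ((R x - P x) / P x)\<^sup>2 / (1 - c * ((R x - P x) / P x)))"
proof -
  have "(\<Sum>x\<in>A. P x * minorant (R x / P x))
      = k * (\<Sum>x\<in>A. P x * ((R x - P x) / P x))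
        + a * (\<Sum>x\<in>A. P x * ((R x - P x) / P x)\<^sup>2 / (1 - c * ((R x - P x) / P x)))"
    unfolding sum_distrib_left sum.distrib[symmetric]
  proof (rule sum.cong)
    fix x assume "x \<in> A"
    then have "R x / P x - 1 = (R x - P x) / P x" using assms(1) by (simp add: diff_divide_distrib)
    then show "P x * minorant (R x / P x)
        = k * (P x * ((R x - P x) / P x)) + a * (P x * ((R x - P x) / P x)\<^sup>2 / (1 - c * ((R x - P x) / P x)))"
      by (simp add: minorant_def algebra_simps)
  qed simp
  then show ?thesis using sum_mult_relative_diff_eq_zero[OF assms] by simp
qed

context
  fixes P R :: "'b::finite \<Rightarrow> real"
  assumes P_pos: "\<And>x. 0 < P x" and R_nonneg: "\<And>x. 0 \<le> R x"
begin

lemma f_div_infinite: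
  assumes "1 + c = 0" and "R x = 0"
  shows "f_div f R P = \<infinity>"
  unfolding f_div_def sum_Pinfty
  using assms P_pos[of x] f_at_zero_infinite by auto

context
  assumes finite_at_zero: "0 < 1 + c \<or> (\<forall>x. R x \<noteq> 0)"
begin

lemma denominator_at_ratio_pos: "0 < 1 - c * (R x / P x - 1)"
proof (cases "R x = 0")
  case True
  then show ?thesis using finite_at_zero by auto
next
  case False
  then have "0 < R x / P x" using R_nonneg[of x] P_pos[of x] by simp
  then show ?thesis using denominator_pos[of "R x / P x"] by (cases "R x / P x = 1") auto
qed

lemma sum_minorant_le_f_div: "ereal (\<Sum>x\<in>UNIV. P x * minorant (R x / P x)) \<le> f_div f R P"
  unfolding f_div_def sum_ereal[symmetric]
proof (rule sum_mono)
  fix x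
  have P_nonneg: "0 \<le> P x" using P_pos[of x] by simp
  show "ereal (P x * minorant (R x / P x))
      \<le> (if R x = 0 then ereal (P x) * f_at_zero f else ereal (P x * f (R x / P x)))"
  proof (cases "R x = 0")
    case True
    then have "ereal (P x) * ereal (minorant 0) \<le> ereal (P x) * f_at_zero f"
      using finite_at_zero f_at_zero_ge_minorant P_nonneg by (intro ereal_mult_left_mono) auto
    then show ?thesis using True by simp
  next
    case False
    then have "0 < R x / P x" using R_nonneg[of x] P_pos[of x] by simp
    then show ?thesis using False minorant_le P_nonneg by (simp add: mult_left_mono)
  qed
qed

lemma chi2_mult_L1_div_max_le_sum_minorant:
  assumes P_sum: "sum P UNIV = 1" and R_sum: "sum R UNIV = 1" and R_ne_P: "R \<noteq> P"
  shows "a * ((\<Sum>x\<in>UNIV. ((R x - P x) / sqrt (P x))\<^sup>2) * (\<Sum>x\<in>UNIV. \<bar>R x - P x\<bar>))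
      / (MAX x\<in>UNIV. \<bar>(R x - P x) / P x\<bar>) \<le> (\<Sum>x\<in>UNIV. P x * minorant (R x / P x))"
proof -
  define u where "u x = (R x - P x) / P x" for x
  define M where "M = (MAX x\<in>UNIV. \<bar>u x\<bar>)"
  have P_nonzero: "P x \<noteq> 0" for x using P_pos by (metis less_irrefl)
  have u_le_M: "\<bar>u x\<bar> \<le> M" for x
    unfolding M_def by (rule Max_ge) auto
  obtain x0 where "R x0 \<noteq> P x0" using R_ne_P by auto
  then have "0 < \<bar>u x0\<bar>"
    using P_nonzero[of x0] by (simp add: u_def)
  then have "0 < M"
    using u_le_M[of x0] by linarith
  moreover have "0 < 1 - c * u x" for x
    using denominator_at_ratio_pos[of x] P_nonzero[of x]
    by (simp add: u_def diff_divide_distrib)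
  moreover have "(\<Sum>x\<in>UNIV. P x * (1 - c * u x)) = (\<Sum>x\<in>UNIV. P x) - c * (\<Sum>x\<in>UNIV. P x * u x)"
    by (simp add: algebra_simps sum_subtractf sum_distrib_left)
  then have "(\<Sum>x\<in>UNIV. P x * (1 - c * u x)) = 1"
    using sum_mult_relative_diff_eq_zero[of UNIV P R] P_nonzero P_sum R_sum by (simp add: u_def)
  ultimately have "(\<Sum>x\<in>UNIV. P x * (u x)\<^sup>2) * (\<Sum>x\<in>UNIV. P x * \<bar>u x\<bar>) / M
      \<le> (\<Sum>x\<in>UNIV. P x * (u x)\<^sup>2 / (1 - c * u x))"
    using P_pos u_le_M by (intro sum_sq_mult_sum_abs_div_max_le) (auto simp: less_imp_le)
  moreover have "(\<Sum>x\<in>UNIV. ((R x - P x) / sqrt (P x))\<^sup>2) = (\<Sum>x\<in>UNIV. P x * (u x)\<^sup>2)"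
    using P_pos P_nonzero by (intro sum.cong) (auto simp: u_def power_divide less_imp_le power2_eq_square)
  moreover have "(\<Sum>x\<in>UNIV. \<bar>R x - P x\<bar>) = (\<Sum>x\<in>UNIV. P x * \<bar>u x\<bar>)"
    using P_pos P_nonzero by (intro sum.cong) (auto simp: u_def abs_mult less_imp_le)
  ultimately show ?thesis
    using sum_minorant_eq[of UNIV P R] P_nonzero P_sum R_sum a_pos
    by (simp add: M_def u_def mult_left_mono flip: times_divide_eq_right)
qed

end

lemma f_div_ge_chi2_mult_L1_div_max:
  assumes "sum P UNIV = 1" and "sum R UNIV = 1" and "R \<noteq> P"
  shows "ereal (a * ((\<Sum>x\<in>UNIV. ((R x - P x) / sqrt (P x))\<^sup>2) * (\<Sum>x\<in>UNIV. \<bar>R x - P x\<bar>))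
      / (MAX x\<in>UNIV. \<bar>(R x - P x) / P x\<bar>)) \<le> f_div f R P"
proof (cases "1 + c = 0 \<and> (\<exists>x. R x = 0)")
  case True
  then show ?thesis using f_div_infinite by auto
next
  case False
  then have "0 < 1 + c \<or> (\<forall>x. R x \<noteq> 0)"
    using one_plus_c_nonneg by auto
  then show ?thesis
    using chi2_mult_L1_div_max_le_sum_minorant[OF _ assms] sum_minorant_le_f_div
    by (meson ereal_less_eq(3) order_trans)
qed

end

end

theorem lemma5:
  fixes f f1 f2 :: "real \<Rightarrow> real" and f3 e :: real
    and P R :: "'a::finite \<Rightarrow> real"
  assumes convex: "convex_on {0<..} f"
    and strict: "strictly_convex_at_one f"
    and e_pos: "e > 0"
    and d1: "\<forall>x\<in>ball 1 e. (f has_real_derivative f1 x) (at x)"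
    and d2: "\<forall>x\<in>ball 1 e. (f1 has_real_derivative f2 x) (at x)"
    and d3: "(f2 has_real_derivative f3) (at 1)"
    and f1_zero: "f 1 = 0"
    and f2_pos: "f2 1 > 0"
    and ineq: "\<forall>t>0. (f t - f1 1 * (t - 1)) * (1 - f3 / (3 * f2 1) * (t - 1))
                        \<ge> f2 1 / 2 * (t - 1)^2"
    and P_pos: "\<forall>x. P x > 0" and P_sum: "(\<Sum>x\<in>UNIV. P x) = 1"
    and R_nonneg: "\<forall>x. R x \<ge> 0" and R_sum: "(\<Sum>x\<in>UNIV. R x) = 1"
    and R_ne_P: "R \<noteq> P"
  shows "f_div f R P \<ge>
    ereal (f2 1 / 2 *
      ((\<Sum>x\<in>UNIV. ((R x - P x) / sqrt (P x))^2) * (\<Sum>x\<in>UNIV. \<bar>R x - P x\<bar>))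
      / (MAX x\<in>UNIV. \<bar>(R x - P x) / P x\<bar>))"
proof -
  \<comment> \<open>Strict convexity and the derivatives beyond \<open>f'(1)\<close> enter only through \<open>ineq\<close>.\<close>
  define k a c where "k = f1 1" and "a = f2 1 / 2" and "c = f3 / (3 * f2 1)"
  have "(f has_real_derivative k) (at 1)"
    using d1 e_pos by (simp add: k_def)
  then have tangent: "k * (t - 1) \<le> f t" if "0 < t" for t
    using convex_on_imp_above_tangent[OF convex, of 1 t k] that f1_zero
    by (auto intro: has_field_derivative_at_within simp: interior_open)
  interpret rational_minorant f k a c
    using f2_pos tangent ineq by unfold_locales (auto simp: a_def k_def c_def)
  show ?thesis
    using f_div_ge_chi2_mult_L1_div_max[of P R] P_pos R_nonneg P_sum R_sum R_ne_P
    by (simp add: a_def)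
qed

end
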